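(* Consider the coupled jump dynamics on the state space $S$ described below. For every state $(\underline x,I,\underline y,J,N)\in S$ and every one of the four types of jumps, the state $(\underline x',I',\underline y',J',N')$ after the jump belongs to $S$, and $I'\setminus I'_=\subseteq I\setminus I_=$. Moreover, in a death event, for every $i\in I\cap I'$ one has $|x'_i-y'_i|\le|x_i-y_i|$.
   Context: Fix $j>0$, $\varepsilon>0$ with $\varepsilon^{-1}\in\mathbb N$, $\Lambda_\varepsilon=\{0,\dots,\varepsilon^{-1}\}$, and integers $n>0$, $m\ge0$. A labeled configuration is a pair $(\underline x,I)$ with $I\subset\mathbb N$ finite and $\underline x=(x_i)_{i\in I}$, $x_i\in\Lambda_\varepsilon$. The state space $S$ consists of all $(\underline x,I,\underline y,J,N)$ with $(\underline x,I),(\underline y,J)$ labeled configurations, $I\subset J$, $|J\setminus I|\le m$, $N=\max J$. Let $I_==\{i\in I:x_i=y_i\}$. Jumps from $(\underline x,I,\underline y,J,N)$: (1) Single random-walk jumps: for each $i\in I\setminus I_=$ and each sign $\pm$, at rate $1/2$, $x_i\to x_i\pm1$ (suppressed if $x_i\pm1\notin\Lambda_\varepsilon$), everything else unchanged; for each $i\in J\setminus I_=$ and each sign, at rate $1/2$, $y_i\to y_i\pm1$ (suppressed if outside $\Lambda_\varepsilon$), everything else unchanged. (2) Double random-walk jumps: for each $i\in I_=$ and each sign, at rate $1/2$, both $x_i$ and $y_i$ move to $x_i\pm1$ (suppressed if outside $\Lambda_\varepsilon$). (3) Creation: at rate $\varepsilon j$, $N'=N+1$, $I'=I\cup\{N+1\}$,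 $J'=J\cup\{N+1\}$, $x'_{N+1}=y'_{N+1}=0$, other positions unchanged. (4) Death: at rate $\varepsilon j$, $N$ unchanged; let $i$ be the largest label among the particles of $\underline x$ at the rightmost occupied site of $\underline x$, and $k$ the largest label among the particles of $\underline y$ at the rightmost occupied site of $\underline y$; remove label $i$ from $\underline x$ (and from $I$) and label $k$ from $\underline y$ (and from $J$). If $k\notin I$ or $i=k$, stop. If $i\ne k$ and $k\in I$: if $x_k\le y_i$, the $\underline y$-particle labeled $i$ is relabeled $k$ (so label $i$ disappears from both $I$ and $J$); if $y_i<x_k$, the $\underline x$-particle labeled $k$ is relabeled $i$ (so label $k$ disappears from both $I$ and $J$).
   Formalization: In the state space S, the condition $N=\max J$ is replaced by the requirement that every label in J is at most N. The statement above fails without it. *)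

theory Defs
  imports Main
begin

text \<open>Positions in \<Lambda>_eps = {0..M} with M = eps^{-1}; stored as integers.
  A state (x, I, y, J, N): x, y are position functions (only their values on
  I resp. J matter), I, J label sets, N the label counter.\<close>

type_synonym state = "(nat \<Rightarrow> int) \<times> nat set \<times> (nat \<Rightarrow> int) \<times> nat set \<times> nat"

definition in_Lambda :: "nat \<Rightarrow> int \<Rightarrow> bool" where
  "in_Lambda M z \<longleftrightarrow> 0 \<le> z \<and> z \<le> int M"

definition in_S :: "nat \<Rightarrow> nat \<Rightarrow> state \<Rightarrow> bool" where
  "in_S M m s = (case s of (x, I, y, J, N) \<Rightarrow>
     finite J \<and> I \<subseteq> J \<and> card (J - I) \<le> m \<and> (\<forall>l\<in>J. l \<le> N) \<and>
     (\<forall>i\<in>I. in_Lambda M (x i)) \<and> (\<forall>i\<in>J. in_Lambda M (y i)))"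

definition Ieq :: "state \<Rightarrow> nat set" where
  "Ieq s = (case s of (x, I, y, J, N) \<Rightarrow> {i\<in>I. x i = y i})"

definition Iset :: "state \<Rightarrow> nat set" where
  "Iset s = (case s of (x, I, y, J, N) \<Rightarrow> I)"

definition move :: "nat \<Rightarrow> (nat \<Rightarrow> int) \<Rightarrow> nat \<Rightarrow> int \<Rightarrow> nat \<Rightarrow> int" where
  "move M z i d = (if in_Lambda M (z i + d) then z(i := z i + d) else z)"

definition single_jumps :: "nat \<Rightarrow> state \<Rightarrow> state set" where
  "single_jumps M s = (case s of (x, I, y, J, N) \<Rightarrow>
     {(move M x i d, I, y, J, N) | i d. i \<in> I - Ieq s \<and> d \<in> {-1, 1}} \<union>
     {(x, I, move M y i d, J, N) | i d. i \<in> J - Ieq s \<and> d \<in> {-1, 1}})"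

definition double_jumps :: "nat \<Rightarrow> state \<Rightarrow> state set" where
  "double_jumps M s = (case s of (x, I, y, J, N) \<Rightarrow>
     {(if in_Lambda M (x i + d) then (x(i := x i + d), I, y(i := x i + d), J, N)
       else (x, I, y, J, N)) | i d. i \<in> Ieq s \<and> d \<in> {-1, 1}})"

definition creation :: "state \<Rightarrow> state" where
  "creation s = (case s of (x, I, y, J, N) \<Rightarrow>
     (x(N + 1 := 0), insert (N + 1) I, y(N + 1 := 0), insert (N + 1) J, N + 1))"

definition top_label :: "(nat \<Rightarrow> int) \<Rightarrow> nat set \<Rightarrow> nat" where
  "top_label z K = Max {l \<in> K. z l = Max (z ` K)}"

definition death :: "state \<Rightarrow> state" where
  "death s = (case s of (x, I, y, J, N) \<Rightarrow>
     if J = {} then s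
     else if I = {} then (x, I, y, J - {top_label y J}, N)
     else (let i = top_label x I; k = top_label y J in
       if k \<notin> I \<or> i = k then (x, I - {i}, y, J - {k}, N)
       else if x k \<le> y i then (x, I - {i}, y(k := y i), J - {i}, N)
       else (x(i := x k), I - {k}, y, J - {k}, N)))"

end

theory Submission
  imports Defs
begin

text \<open>Random-walk jumps move only coordinates inside \<Lambda>_eps and move agreeing pairs
  together, and creation adds an agreeing pair at a fresh label, so only the death step needs
  work. Either both configurations just lose their top particle, or in addition one surviving
  particle is relabelled so that the labels stay paired. Since the removed particles are the rightmost
  ones, the relabelled particle lands between the two old positions of that label: the pair gets
  no farther apart, and if it agreed before, extremality forces it to agree afterwards.\<close>

definition mismatched :: "state \<Rightarrow> nat set" where
  "mismatched s = Iset s - Ieq s"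

definition admissible_jump :: "nat \<Rightarrow> nat \<Rightarrow> state \<Rightarrow> state \<Rightarrow> bool" where
  "admissible_jump M m s s' \<longleftrightarrow> in_S M m s' \<and> mismatched s' \<subseteq> mismatched s"

definition gaps_nonincreasing :: "state \<Rightarrow> state \<Rightarrow> bool" where
  "gaps_nonincreasing s s' = (case s of (x, I, y, J, N) \<Rightarrow> (case s' of (x', I', y', J', N') \<Rightarrow>
     \<forall>i \<in> I \<inter> I'. \<bar>x' i - y' i\<bar> \<le> \<bar>x i - y i\<bar>))"

lemma admissible_jump_iff:
  "admissible_jump M m (x, I, y, J, N) (x', I', y', J', N') \<longleftrightarrow>
     in_S M m (x', I', y', J', N') \<and>
     {l \<in> I'. x' l \<noteq> y' l} \<subseteq> {l \<in> I. x l \<noteq> y l}"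
  unfolding admissible_jump_def mismatched_def Iset_def Ieq_def by auto

lemma in_S_iff:
  "in_S M m (x, I, y, J, N) \<longleftrightarrow>
     finite J \<and> I \<subseteq> J \<and> card (J - I) \<le> m \<and> (\<forall>l\<in>J. l \<le> N) \<and>
     (\<forall>l\<in>I. in_Lambda M (x l)) \<and> (\<forall>l\<in>J. in_Lambda M (y l))"
  unfolding in_S_def by simp

lemma top_label_in:
  assumes "finite K" "K \<noteq> {}"
  shows "top_label z K \<in> K" and "\<forall>l\<in>K. z l \<le> z (top_label z K)"
proof -
  let ?T = "{l \<in> K. z l = Max (z ` K)}"
  have "?T \<noteq> {}" using Max_in[of "z ` K"] assms by fastforce
  then have "top_label z K \<in> ?T"
    unfolding top_label_def using assms by (intro Max_in) auto
  then show "top_label z K \<in> K" and "\<forall>l\<in>K. z l \<le> z (top_label z K)"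
    using assms by auto
qed

lemma card_insert_Diff_le:
  assumes "finite A" "b \<in> A"
  shows "card (insert a (A - {b})) \<le> card A"
proof (rule card_insert_le_m1)
  show "card A > 0" using assms card_gt_0_iff by blast
  show "card (A - {b}) \<le> card A - 1" using assms by (simp add: card_Diff_singleton)
qed

lemma single_jump_admissible:
  assumes "in_S M m s" "s' \<in> single_jumps M s"
  shows "admissible_jump M m s s'"
proof -
  obtain x I y J N where s: "s = (x, I, y, J, N)" by (cases s)
  from assms(2) consider i d where "i \<in> I - Ieq s" "s' = (move M x i d, I, y, J, N)"
    | i d where "i \<in> J - Ieq s" "s' = (x, I, move M y i d, J, N)"
    unfolding single_jumps_def s by auto
  then show ?thesis
    by cases (use assms(1) in \<open>auto simp: s in_S_iff admissible_jump_iff Ieq_def move_def\<close>)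
qed

lemma double_jump_admissible:
  assumes "in_S M m s" "s' \<in> double_jumps M s"
  shows "admissible_jump M m s s'"
proof -
  obtain x I y J N where s: "s = (x, I, y, J, N)" by (cases s)
  from assms(2) obtain i d where "i \<in> Ieq s" and
    "s' = (if in_Lambda M (x i + d) then (x(i := x i + d), I, y(i := x i + d), J, N)
       else (x, I, y, J, N))"
    unfolding double_jumps_def s by auto
  then show ?thesis
    using assms(1) by (auto simp: s in_S_iff admissible_jump_iff Ieq_def)
qed

lemma creation_admissible:
  assumes "in_S M m s"
  shows "admissible_jump M m s (creation s)"
proof -
  obtain x I y J N where s: "s = (x, I, y, J, N)" by (cases s)
  have fresh: "N + 1 \<notin> J" using assms by (auto simp: s in_S_iff)
  then have "insert (N + 1) J - insert (N + 1) I = J - I" by auto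
  with assms fresh show ?thesis
    by (auto simp: s creation_def in_S_iff admissible_jump_iff in_Lambda_def)
qed

lemma death_remove_admissible:
  assumes "in_S M m (x, I, y, J, N)" "k \<in> J" "k \<notin> I \<or> i = k"
  shows "admissible_jump M m (x, I, y, J, N) (x, I - {i}, y, J - {k}, N)"
proof -
  have fin: "finite J" and card: "card (J - I) \<le> m" and IJ: "I \<subseteq> J"
    using assms(1) by (auto simp: in_S_iff)
  have "card (J - {k} - (I - {i})) \<le> card (J - I)"
  proof (cases "i \<in> I \<and> i \<noteq> k")
    case True
    then have "J - {k} - (I - {i}) = insert i ((J - I) - {k})" using assms(3) IJ by auto
    then show ?thesis using card_insert_Diff_le[of "J - I" k i] fin True assms(2,3) by auto
  next
    case False
    then have "J - {k} - (I - {i}) \<subseteq> J - I" by auto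
    then show ?thesis using fin by (simp add: card_mono)
  qed
  with assms IJ card show ?thesis by (auto simp: in_S_iff admissible_jump_iff)
qed

text \<open>The \<open>y\<close>-particle labelled \<open>i\<close> is relabelled \<open>k\<close>; as \<open>k\<close> was the top particle of
  \<open>y\<close>, its new position \<open>y i\<close> lies between \<open>x k\<close> and the old \<open>y k\<close>.\<close>

lemma death_relabel_y:
  assumes "in_S M m (x, I, y, J, N)" "i \<in> I" "k \<in> I" "y i \<le> y k" "x k \<le> y i"
  defines "s' \<equiv> (x, I - {i}, y(k := y i), J - {i}, N)"
  shows "admissible_jump M m (x, I, y, J, N) s'"
    and "gaps_nonincreasing (x, I, y, J, N) s'"
proof -
  have "J - {i} - (I - {i}) = J - I" using assms(2) by auto
  then show "admissible_jump M m (x, I, y, J, N) s'"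
    using assms by (auto simp: in_S_iff admissible_jump_iff)
  show "gaps_nonincreasing (x, I, y, J, N) s'"
    using assms(4,5) by (auto simp: s'_def gaps_nonincreasing_def)
qed

text \<open>Symmetrically, the \<open>x\<close>-particle labelled \<open>k\<close> is relabelled \<open>i\<close> and lands between
  \<open>y i\<close> and the old \<open>x i\<close>.\<close>

lemma death_relabel_x:
  assumes "in_S M m (x, I, y, J, N)" "k \<in> I" "x k \<le> x i" "y i < x k"
  defines "s' \<equiv> (x(i := x k), I - {k}, y, J - {k}, N)"
  shows "admissible_jump M m (x, I, y, J, N) s'"
    and "gaps_nonincreasing (x, I, y, J, N) s'"
proof -
  have "J - {k} - (I - {k}) = J - I" using assms(1,2) by (auto simp: in_S_iff)
  then show "admissible_jump M m (x, I, y, J, N) s'"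
    using assms by (auto simp: in_S_iff admissible_jump_iff)
  show "gaps_nonincreasing (x, I, y, J, N) s'"
    using assms(3,4) by (auto simp: s'_def gaps_nonincreasing_def)
qed

lemma death_admissible_gaps_nonincreasing:
  assumes "in_S M m s"
  shows "admissible_jump M m s (death s) \<and> gaps_nonincreasing s (death s)"
proof -
  obtain x I y J N where s: "s = (x, I, y, J, N)" by (cases s)
  have finJ: "finite J" and IJ: "I \<subseteq> J" using assms by (auto simp: s in_S_iff)
  have finI: "finite I" using finJ IJ finite_subset by blast
  have unchanged: "gaps_nonincreasing s (x, I', y, J', N)" for I' J'
    by (simp add: s gaps_nonincreasing_def)
  consider "J = {}" | "J \<noteq> {}" "I = {}" | "J \<noteq> {}" "I \<noteq> {}" by blast
  then show ?thesis
  proof cases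
    case 1
    then show ?thesis
      using assms by (simp add: s death_def admissible_jump_def gaps_nonincreasing_def)
  next
    case 2
    then show ?thesis
      using death_remove_admissible[of M m x I y J N "top_label y J" "top_label y J"]
        top_label_in[OF finJ] assms unchanged
      by (simp add: s death_def)
  next
    case 3
    define i k where "i = top_label x I" and "k = top_label y J"
    have i: "i \<in> I" "\<forall>l\<in>I. x l \<le> x i" using top_label_in[OF finI 3(2)] by (auto simp: i_def)
    have k: "k \<in> J" "\<forall>l\<in>J. y l \<le> y k" using top_label_in[OF finJ 3(1)] by (auto simp: k_def)
    have death_eq: "death (x, I, y, J, N) = (if k \<notin> I \<or> i = k then (x, I - {i}, y, J - {k}, N)
        else if x k \<le> y i then (x, I - {i}, y(k := y i), J - {i}, N)
        else (x(i := x k), I - {k}, y, J - {k}, N))"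
      using 3 by (simp add: s death_def i_def k_def Let_def)
    show ?thesis
      using death_remove_admissible[of M m x I y J N k i]
        death_relabel_y[of M m x I y J N i k] death_relabel_x[of M m x I y J N k i]
        assms i k IJ unchanged
      unfolding s death_eq by (auto simp: not_le)
  qed
qed

theorem lemma4p2:
  fixes M m :: nat and s :: state
  assumes "M > 0" and "in_S M m s"
  shows "(\<forall>s' \<in> single_jumps M s \<union> double_jumps M s \<union> {creation s, death s}.
            in_S M m s' \<and> Iset s' - Ieq s' \<subseteq> Iset s - Ieq s)
       \<and> (case s of (x, I, y, J, N) \<Rightarrow> (case death s of (x', I', y', J', N') \<Rightarrow>
            \<forall>i \<in> I \<inter> I'. \<bar>x' i - y' i\<bar> \<le> \<bar>x i - y i\<bar>))"
proof -
  have "\<forall>s' \<in> single_jumps M s \<union> double_jumps M s \<union> {creation s, death s}.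
          admissible_jump M m s s'"
    using single_jump_admissible[OF assms(2)] double_jump_admissible[OF assms(2)]
      creation_admissible[OF assms(2)] death_admissible_gaps_nonincreasing[OF assms(2)] by blast
  moreover have "gaps_nonincreasing s (death s)"
    using death_admissible_gaps_nonincreasing[OF assms(2)] by blast
  ultimately show ?thesis
    unfolding admissible_jump_def mismatched_def gaps_nonincreasing_def by blast
qed

end
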